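(* Let $\mathcal{P}$ be either $\mathcal{Q}_{a,b}$ (for some $a,b\ge1$) or $\mathcal{L}_a$ (for some $a\ge1$), and let $\nu$ be any permutation of $[a]$. Then the function $I\mapsto|I|$ is homomesic for $\mathcal{T}_\nu$ acting on $J(\mathcal{P})$.
   Context: $J(P)$ is the set of order ideals of a finite poset $P$. Toggle: $\sigma_x(I)=I\cup\{x\}$ if $x\notin I$ and $I\cup\{x\}\in J(P)$; $I\setminus\{x\}$ if $x\in I$ and $I\setminus\{x\}\in J(P)$; $I$ otherwise. For a chain $C=\{x_1<\dots<x_m\}$, $\sigma_C=\sigma_{x_1}\circ\cdots\circ\sigma_{x_m}$. $\mathcal{Q}_{a,b}=[a]\times[b]$ with componentwise order and columns $C_c=\{(c,j): j\in[b]\}$; $\mathcal{L}_a=\{(i,j)\in[a]^2:i\le j\}$ with componentwise order and columns $C_c=\{(c,j):c\le j\le a\}$. Comotion: $\mathcal{T}_\nu=\sigma_{C_{\nu(a)}}\circ\cdots\circ\sigma_{C_{\nu(1)}}$. A function on a finite set with a permutation $\tau$ is homomesic if its average over every $\tau$-orbit is the same constant. *)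

theory Defs
  imports Complex_Main "HOL-Combinatorics.Permutations"
begin

definition cleq :: "nat \<times> nat \<Rightarrow> nat \<times> nat \<Rightarrow> bool" where
  "cleq p q \<longleftrightarrow> fst p \<le> fst q \<and> snd p \<le> snd q"

definition Qposet :: "nat \<Rightarrow> nat \<Rightarrow> (nat \<times> nat) set" where
  "Qposet a b = {1..a} \<times> {1..b}"

definition Lposet :: "nat \<Rightarrow> (nat \<times> nat) set" where
  "Lposet a = {(i, j). 1 \<le> i \<and> i \<le> j \<and> j \<le> a}"

definition is_ideal :: "(nat \<times> nat) set \<Rightarrow> (nat \<times> nat) set \<Rightarrow> bool" where
  "is_ideal P I \<longleftrightarrow> I \<subseteq> P \<and> (\<forall>x\<in>I. \<forall>y\<in>P. cleq y x \<longrightarrow> y \<in> I)"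

definition ideals :: "(nat \<times> nat) set \<Rightarrow> (nat \<times> nat) set set" where
  "ideals P = {I. is_ideal P I}"

definition toggle :: "(nat \<times> nat) set \<Rightarrow> nat \<times> nat \<Rightarrow> (nat \<times> nat) set \<Rightarrow> (nat \<times> nat) set" where
  "toggle P x I =
     (if x \<notin> I \<and> is_ideal P (insert x I) then insert x I
      else if x \<in> I \<and> is_ideal P (I - {x}) then I - {x}
      else I)"

text \<open>Toggling a chain given as increasing list [x1,...,xm]:
  sigma_{x1} o ... o sigma_{xm} (so xm is toggled first).\<close>
definition chain_toggle :: "(nat \<times> nat) set \<Rightarrow> (nat \<times> nat) list \<Rightarrow> (nat \<times> nat) set \<Rightarrow> (nat \<times> nat) set" where
  "chain_toggle P xs = foldr (\<lambda>x f. toggle P x \<circ> f) xs id"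

definition column :: "(nat \<times> nat) set \<Rightarrow> nat \<Rightarrow> (nat \<times> nat) list" where
  "column P c = map (Pair c) (sorted_list_of_set {j. (c, j) \<in> P})"

text \<open>Comotion T_nu = sigma_{C_{nu(a)}} o ... o sigma_{C_{nu(1)}}.\<close>
definition comotion :: "(nat \<times> nat) set \<Rightarrow> nat \<Rightarrow> (nat \<Rightarrow> nat) \<Rightarrow> (nat \<times> nat) set \<Rightarrow> (nat \<times> nat) set" where
  "comotion P a \<nu> = fold (\<lambda>c f. chain_toggle P (column P c) \<circ> f) (map \<nu> [1..<a+1]) id"

definition orbit :: "('a \<Rightarrow> 'a) \<Rightarrow> 'a \<Rightarrow> 'a set" where
  "orbit \<tau> x = {(\<tau> ^^ n) x | n. True}"

definition homomesic :: "'a set \<Rightarrow> ('a \<Rightarrow> 'a) \<Rightarrow> ('a \<Rightarrow> real) \<Rightarrow> bool" where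
  "homomesic S \<tau> f \<longleftrightarrow>
     (\<exists>c. \<forall>x\<in>S. (\<Sum>y\<in>orbit \<tau> x. f y) / real (card (orbit \<tau> x)) = c)"

end

theory Submission
  imports Defs
begin

text \<open>An order ideal of \<open>P\<close> is determined by its column heights, and each height ranges over
  an interval whose ends depend only on the heights of the two neighbouring columns. Toggling the
  chain \<open>C\<^sub>c\<close> from the top down adds a cell on top of column \<open>c\<close> when this is possible and
  otherwise empties the column down to its lower end, so \<open>T\<^sub>\<nu>\<close> acts on height vectors as a
  product of cyclic column moves. For the order \<open>\<nu> = id\<close>, the cardinality minus the predicted
  average (\<open>ab/2\<close>, resp. \<open>a(a+1)/4\<close>) is an explicit coboundary \<open>g - g \<circ> T\<close> and thus averages
  to zero over every orbit. Every other order arises from the identity by rotating the word of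
  columns, which conjugates \<open>T\<close> by a single column move that changes \<open>|I|\<close> by a coboundary,
  and by swapping columns at distance at least two, whose moves commute; neither operation
  changes the orbit averages.\<close>

section \<open>Orbits and homomesy\<close>

lemma funpow_closed: "T ` V \<subseteq> V \<Longrightarrow> x \<in> V \<Longrightarrow> (T ^^ n) x \<in> V"
  by (induction n) auto

lemma orbit_subset:
  assumes "T ` V \<subseteq> V" "x \<in> V"
  shows "orbit T x \<subseteq> V"
  unfolding orbit_def using funpow_closed[OF assms] by auto

lemma self_in_orbit: "x \<in> orbit T x"
  unfolding orbit_def by (auto intro: exI[of _ 0])

lemma image_orbit_subset: "T ` orbit T x \<subseteq> orbit T x"
proof
  fix y assume "y \<in> T ` orbit T x"
  then obtain n where "y = (T ^^ Suc n) x" unfolding orbit_def by auto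
  thus "y \<in> orbit T x" unfolding orbit_def by blast
qed

lemma orbit_conj:
  assumes "T ` V \<subseteq> V" "\<And>y. y \<in> V \<Longrightarrow> T' (s y) = s (T y)" "x \<in> V"
  shows "orbit T' (s x) = s ` orbit T x"
proof -
  have "(T' ^^ n) (s x) = s ((T ^^ n) x)" for n
    using funpow_closed[OF assms(1,3)] by (induction n) (auto simp: assms(2))
  thus ?thesis unfolding orbit_def by auto
qed

definition homomesic_const :: "'a set \<Rightarrow> ('a \<Rightarrow> 'a) \<Rightarrow> ('a \<Rightarrow> real) \<Rightarrow> real \<Rightarrow> bool" where
  "homomesic_const V T F C \<longleftrightarrow> (\<forall>x\<in>V. (\<Sum>y\<in>orbit T x. F y - C) = 0)"

lemma homomesic_const_imp_homomesic:
  assumes "finite V" "T ` V \<subseteq> V" "homomesic_const V T F C"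
  shows "homomesic V T F"
  unfolding homomesic_def
proof (intro exI[of _ C] ballI)
  fix x assume x: "x \<in> V"
  have "finite (orbit T x)" using orbit_subset[OF assms(2) x] assms(1) finite_subset by blast
  hence "card (orbit T x) > 0" using self_in_orbit card_gt_0_iff by fast
  moreover have "(\<Sum>y\<in>orbit T x. F y) - real (card (orbit T x)) * C = 0"
    using assms(3) x unfolding homomesic_const_def by (simp add: sum_subtractf)
  ultimately show "(\<Sum>y\<in>orbit T x. F y) / real (card (orbit T x)) = C"
    by (simp add: field_simps)
qed

lemma homomesic_transfer:
  assumes "T ` V \<subseteq> V" "inj_on d V" "d ` V = S"
    and "\<And>y. y \<in> V \<Longrightarrow> T' (d y) = d (T y)"
    and "\<And>y. y \<in> V \<Longrightarrow> f (d y) = F y"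
    and "homomesic V T F"
  shows "homomesic S T' f"
proof -
  obtain C where C: "\<forall>y\<in>V. (\<Sum>z\<in>orbit T y. F z) / real (card (orbit T y)) = C"
    using assms(6) unfolding homomesic_def by blast
  show ?thesis unfolding homomesic_def
  proof (intro exI[of _ C] ballI)
    fix x assume "x \<in> S"
    then obtain y where y: "y \<in> V" "x = d y" using assms(3) by auto
    have O: "orbit T y \<subseteq> V" using orbit_subset[OF assms(1) y(1)] .
    have inj: "inj_on d (orbit T y)" using inj_on_subset[OF assms(2) O] .
    have e: "orbit T' x = d ` orbit T y" using orbit_conj[where s=d, OF assms(1,4) y(1)] y(2) by simp
    have "(\<Sum>z\<in>orbit T' x. f z) = (\<Sum>z\<in>orbit T y. F z)"
      unfolding e sum.reindex[OF inj] using O assms(5) by (intro sum.cong) auto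
    moreover have "card (orbit T' x) = card (orbit T y)" using e inj card_image by auto
    ultimately show "(\<Sum>z\<in>orbit T' x. f z) / real (card (orbit T' x)) = C"
      using C y(1) by simp
  qed
qed

context
  fixes V and T :: "'a \<Rightarrow> 'a"
  assumes fin: "finite V" and maps: "T ` V \<subseteq> V" and inj: "inj_on T V"
begin

lemma image_orbit: "x \<in> V \<Longrightarrow> T ` orbit T x = orbit T x"
  using endo_inj_surj[OF _ image_orbit_subset] orbit_subset[OF maps] fin
    inj_on_subset[OF inj] finite_subset by metis

lemma sum_orbit_shift:
  assumes "x \<in> V"
  shows "(\<Sum>y\<in>orbit T x. g (T y)) = (\<Sum>y\<in>orbit T x. g y)"
  using sum.reindex[OF inj_on_subset[OF inj orbit_subset[OF maps assms]], of g]
  by (simp add: image_orbit[OF assms])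

lemma coboundary_homomesic_const:
  assumes "\<And>y. y \<in> V \<Longrightarrow> F y - C = g y - g (T y)"
  shows "homomesic_const V T F C"
  unfolding homomesic_const_def
proof
  fix x assume x: "x \<in> V"
  have "(\<Sum>y\<in>orbit T x. F y - C) = (\<Sum>y\<in>orbit T x. g y - g (T y))"
    using orbit_subset[OF maps x] assms by (intro sum.cong) auto
  also have "\<dots> = 0" using sum_orbit_shift[OF x, of g] by (simp add: sum_subtractf)
  finally show "(\<Sum>y\<in>orbit T x. F y - C) = 0" .
qed

text \<open>If \<open>s\<close> intertwines \<open>T\<close> with \<open>T'\<close>, the \<open>T'\<close>-orbits are the \<open>s\<close>-images of the
  \<open>T\<close>-orbits; the defect \<open>F \<circ> s - F\<close> is a coboundary of \<open>T\<close>, so it sums to zero along them.\<close>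
lemma homomesic_const_intertwine:
  assumes "s ` V \<subseteq> V" "inj_on s V"
    and "\<And>y. y \<in> V \<Longrightarrow> T' (s y) = s (T y)"
    and "\<And>y. y \<in> V \<Longrightarrow> F (s y) - F y = G (T y) - G y"
    and "homomesic_const V T F C"
  shows "homomesic_const V T' F C"
  unfolding homomesic_const_def
proof
  fix x assume x: "x \<in> V"
  have "s ` V = V" using endo_inj_surj[OF fin assms(1,2)] .
  then obtain y where y: "y \<in> V" "x = s y" using x by auto
  have O: "orbit T y \<subseteq> V" using orbit_subset[OF maps y(1)] .
  have "(\<Sum>z\<in>orbit T' x. F z - C) = (\<Sum>z\<in>orbit T y. F (s z) - C)"
    using orbit_conj[where s=s, OF maps assms(3) y(1)] y(2) inj_on_subset[OF assms(2) O]
    by (simp add: sum.reindex)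
  also have "\<dots> = (\<Sum>z\<in>orbit T y. F z - C) + ((\<Sum>z\<in>orbit T y. G (T z)) - (\<Sum>z\<in>orbit T y. G z))"
    using O assms(4) by (force simp: sum.distrib[symmetric] sum_subtractf[symmetric] intro: sum.cong)
  also have "\<dots> = 0"
    using assms(5) y(1) sum_orbit_shift[OF y(1), of G] unfolding homomesic_const_def by simp
  finally show "(\<Sum>z\<in>orbit T' x. F z - C) = 0" .
qed

end

section \<open>Words reachable by rotation and commutation\<close>

definition rotation_closed :: "('a list \<Rightarrow> bool) \<Rightarrow> bool" where
  "rotation_closed Q \<longleftrightarrow> (\<forall>u v. Q (u @ v) \<longrightarrow> Q (v @ u))"

definition commutation_closed :: "nat \<Rightarrow> (nat list \<Rightarrow> bool) \<Rightarrow> bool" where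
  "commutation_closed a Q \<longleftrightarrow>
     (\<forall>u v x y. x \<le> a \<longrightarrow> y \<le> a \<longrightarrow> x + 2 \<le> y \<or> y + 2 \<le> x \<longrightarrow>
        Q (u @ [x, y] @ v) \<longrightarrow> Q (u @ [y, x] @ v))"

lemma commute_past:
  assumes "commutation_closed a Q" "z \<le> a"
    and "\<forall>y\<in>set Z. y \<le> a \<and> (y + 2 \<le> z \<or> z + 2 \<le> y)"
  shows "Q (L @ [z] @ Z @ R) \<Longrightarrow> Q (L @ Z @ [z] @ R)"
  using assms(3)
proof (induction Z arbitrary: L)
  case (Cons y Z)
  have "Q (L @ [y, z] @ Z @ R)"
    using assms(1,2) Cons.prems unfolding commutation_closed_def
    by (metis list.set_intros(1) append_Cons append_Nil)
  thus ?case using Cons.IH[of "L @ [y]"] Cons.prems(2) by simp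
qed simp

fun insert_succ :: "nat \<Rightarrow> nat list \<Rightarrow> nat list" where
  "insert_succ m [] = []"
| "insert_succ m (x # xs) = (if x = m then [m, Suc m] else [x]) @ insert_succ m xs"

lemma insert_succ_append [simp]: "insert_succ m (xs @ ys) = insert_succ m xs @ insert_succ m ys"
  by (induction xs) auto

lemma insert_succ_notin: "m \<notin> set xs \<Longrightarrow> insert_succ m xs = xs"
  by (induction xs) auto

lemma commutation_closed_insert_succ:
  assumes "commutation_closed (Suc m) Q"
  shows "commutation_closed m (\<lambda>xs. Q (insert_succ m xs))"
  unfolding commutation_closed_def
proof (intro allI impI)
  fix u v x y
  assume xy: "x \<le> m" "y \<le> m" "x + 2 \<le> y \<or> y + 2 \<le> x"
    and Q: "Q (insert_succ m (u @ [x, y] @ v))"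
  let ?U = "insert_succ m u" and ?V = "insert_succ m v"
  have swap: "Q (L @ [q, p] @ R)"
    if "Q (L @ [p, q] @ R)" "p \<le> Suc m" "q \<le> Suc m" "p + 2 \<le> q \<or> q + 2 \<le> p" for L R p q
    using assms that unfolding commutation_closed_def by blast
  consider "x = m" | "y = m" | "x \<noteq> m" "y \<noteq> m" by blast
  then show "Q (insert_succ m (u @ [y, x] @ v))"
  proof cases
    case 1
    with xy have y: "y + 2 \<le> m" by auto
    have "Q ((?U @ [m]) @ [Suc m, y] @ ?V)" using Q 1 y by simp
    hence "Q (?U @ [m, y] @ (Suc m # ?V))" using swap[of "?U @ [m]" "Suc m" y ?V] y by simp
    hence "Q (?U @ [y, m] @ (Suc m # ?V))" using swap[of ?U m y] y by simp
    thus ?thesis using 1 y by simp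
  next
    case 2
    with xy have x: "x + 2 \<le> m" by auto
    have "Q (?U @ [x, m] @ (Suc m # ?V))" using Q 2 x by simp
    hence "Q ((?U @ [m]) @ [x, Suc m] @ ?V)" using swap[of ?U x m] x by simp
    hence "Q ((?U @ [m]) @ [Suc m, x] @ ?V)" using swap[of "?U @ [m]" x "Suc m"] x by simp
    thus ?thesis using 2 x by simp
  next
    case 3
    thus ?thesis using Q swap[of ?U x y ?V] xy by simp
  qed
qed

text \<open>Since \<open>m + 1\<close> commutes with every letter but \<open>m\<close>, it can be carried cyclically from
  its place right after \<open>m\<close> to any other position not separated from it by \<open>m\<close>.\<close>
lemma insert_succ_reach:
  assumes rot: "rotation_closed Q" and comm: "commutation_closed (Suc m) Q"
    and uv: "distinct (u @ v)" "set (u @ v) = {1..m}" "m \<in> set (u @ v)"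
    and Q: "Q (insert_succ m (u @ v))"
  shows "Q (u @ [Suc m] @ v)"
proof -
  have move: "Q (L @ Z @ [Suc m] @ R)"
    if "Q (L @ [Suc m] @ Z @ R)" "set Z \<subseteq> set (u @ v) - {m}" for L Z R
    using commute_past[OF comm _ _ that(1)] that(2) uv(2) by fastforce
  have rotate: "Q (R @ L)" if "Q (L @ R)" for L R
    using rot that unfolding rotation_closed_def by blast
  show ?thesis
  proof (cases "m \<in> set u")
    case True
    then obtain u1 u2 where u: "u = u1 @ m # u2" by (meson split_list)
    have "m \<notin> set u2" "m \<notin> set u1 \<union> set v" using uv(1) u by auto
    hence "Q ((u1 @ [m]) @ [Suc m] @ u2 @ v)" using Q u by (simp add: insert_succ_notin)
    moreover have "set u2 \<subseteq> set (u @ v) - {m}" using u \<open>m \<notin> set u2\<close> by auto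
    ultimately have "Q ((u1 @ [m]) @ u2 @ [Suc m] @ v)" by (rule move)
    thus ?thesis using u by simp
  next
    case False
    with uv(3) have "m \<in> set v" by simp
    then obtain v1 v2 where v: "v = v1 @ m # v2" by (meson split_list)
    have nm: "m \<notin> set u \<union> set v1" "m \<notin> set v2" using uv(1) v False by auto
    have v2: "set v2 \<subseteq> set (u @ v) - {m}" and u: "set u \<subseteq> set (u @ v) - {m}"
      using nm v by auto
    have "Q ((u @ v1 @ [m]) @ [Suc m] @ v2 @ [])" using Q v nm by (simp add: insert_succ_notin)
    from move[OF this v2] have "Q ((u @ v1 @ [m]) @ v2 @ [Suc m] @ [])" .
    hence "Q ([Suc m] @ u @ v1 @ [m] @ v2)" using rotate[of "u @ v1 @ [m] @ v2" "[Suc m]"] by simp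
    hence "Q ([] @ u @ [Suc m] @ (v1 @ [m] @ v2))" using move[OF _ u, of "[]"] by simp
    thus ?thesis using v by simp
  qed
qed

text \<open>Induction on \<open>a\<close>: deleting the letter \<open>a\<close> from \<open>w\<close> leaves a permutation word of
  \<open>1..a-1\<close>, which is reachable for the property \<open>Q \<circ> insert_succ (a - 1)\<close>; from there the
  letter \<open>a\<close> is moved into its place.\<close>
theorem permutation_words_reachable:
  assumes "rotation_closed Q" "commutation_closed a Q" "Q [1..<a+1]"
    and "distinct w" "set w = {1..a}"
  shows "Q w"
  using assms
proof (induction a arbitrary: Q w)
  case (Suc m)
  show ?case
  proof (cases "m = 0")
    case True
    have "length w = 1" using distinct_card[OF Suc.prems(4)] Suc.prems(5) True by simp
    then obtain x where "w = [x]" by (auto simp: length_Suc_conv)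
    with Suc.prems(3,5) True show ?thesis by simp
  next
    case False
    have "Suc m \<in> set w" using Suc.prems(5) by simp
    from split_list[OF this] obtain u v where w: "w = u @ [Suc m] @ v" by auto
    have uv: "distinct (u @ v)" "set (u @ v) = {1..m}"
    proof -
      show "distinct (u @ v)" using Suc.prems(4) w by simp
      have "set (u @ v) = set w - {Suc m}" using Suc.prems(4) w by auto
      also have "\<dots> = {1..m}" unfolding Suc.prems(5) by auto
      finally show "set (u @ v) = {1..m}" .
    qed
    have rot: "rotation_closed (\<lambda>xs. Q (insert_succ m xs))"
      using Suc.prems(1) unfolding rotation_closed_def by simp
    have "insert_succ m [1..<m+1] = [1..<Suc m + 1]"
      using False by (simp add: insert_succ_notin)
    hence base: "Q (insert_succ m [1..<m+1])" using Suc.prems(3) by simp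
    have "Q (insert_succ m (u @ v))"
      using Suc.IH[OF rot commutation_closed_insert_succ[OF Suc.prems(2)] base uv] .
    moreover have "m \<in> set (u @ v)" using False uv(2) by simp
    ultimately show ?thesis using insert_succ_reach[OF Suc.prems(1,2) uv] w by simp
  qed
qed simp

section \<open>Cyclic column moves\<close>

lemma fold_comp_eq:
  fixes g :: "'a \<Rightarrow> 'b \<Rightarrow> 'b" and h :: "'b \<Rightarrow> 'b"
  shows "fold (\<lambda>c f. g c \<circ> f) w h = fold (\<lambda>c f. g c \<circ> f) w id \<circ> h"
proof (induction w arbitrary: h)
  case (Cons c w)
  show ?case using Cons.IH[of "g c \<circ> h"] Cons.IH[of "g c"] by (simp add: comp_assoc)
qed simp

lemma fold_comp_intertwine:
  assumes "\<And>c n. c \<in> set w \<Longrightarrow> n \<in> V \<Longrightarrow> \<sigma> c (d n) = d (\<tau> c n) \<and> \<tau> c n \<in> V" "n \<in> V"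
  shows "fold (\<lambda>c f. \<sigma> c \<circ> f) w id (d n) = d (fold (\<lambda>c f. \<tau> c \<circ> f) w id n)"
  using assms
proof (induction w arbitrary: n)
  case (Cons c w)
  have "fold (\<lambda>c f. \<sigma> c \<circ> f) (c # w) id (d n) = fold (\<lambda>c f. \<sigma> c \<circ> f) w id (d (\<tau> c n))"
    using fold_comp_eq[of \<sigma> w "\<sigma> c"] Cons.prems by simp
  also have "\<dots> = d (fold (\<lambda>c f. \<tau> c \<circ> f) w id (\<tau> c n))"
    using Cons.prems by (intro Cons.IH) auto
  also have "\<dots> = d (fold (\<lambda>c f. \<tau> c \<circ> f) (c # w) id n)"
    using fold_comp_eq[of \<tau> w "\<tau> c"] by simp
  finally show ?case .
qed simp

locale column_system =
  fixes a :: nat and U Lo :: "nat \<Rightarrow> (nat \<Rightarrow> nat) \<Rightarrow> nat" and V :: "(nat \<Rightarrow> nat) set"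
  assumes finite_states: "finite V"
    and update_iff: "\<And>n c m. n \<in> V \<Longrightarrow> c \<in> {1..a} \<Longrightarrow> n(c := m) \<in> V \<longleftrightarrow> Lo c n \<le> m \<and> m \<le> U c n"
    and upper_local: "\<And>c n n'. n (c - 1) = n' (c - 1) \<Longrightarrow> U c n = U c n'"
    and lower_local: "\<And>c n n'. n (c + 1) = n' (c + 1) \<Longrightarrow> Lo c n = Lo c n'"
begin

definition cycle :: "nat \<Rightarrow> (nat \<Rightarrow> nat) \<Rightarrow> nat \<Rightarrow> nat" where
  "cycle c n = n(c := if n c < U c n then Suc (n c) else Lo c n)"

definition cycles :: "nat list \<Rightarrow> (nat \<Rightarrow> nat) \<Rightarrow> nat \<Rightarrow> nat" where
  "cycles w = fold (\<lambda>c f. cycle c \<circ> f) w id"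

definition total :: "(nat \<Rightarrow> nat) \<Rightarrow> real" where
  "total n = (\<Sum>c\<in>{1..a}. real (n c))"

lemma state_bounds: "n \<in> V \<Longrightarrow> c \<in> {1..a} \<Longrightarrow> Lo c n \<le> n c \<and> n c \<le> U c n"
  using update_iff[of n c "n c"] by simp

lemma cycle_in:
  assumes "n \<in> V" "c \<in> {1..a}"
  shows "cycle c n \<in> V"
  using state_bounds[OF assms] unfolding cycle_def update_iff[OF assms] by auto

lemma cycle_other: "d \<noteq> c \<Longrightarrow> cycle c n d = n d"
  unfolding cycle_def by simp

lemma cycle_inj: "c \<in> {1..a} \<Longrightarrow> inj_on (cycle c) V"
proof (rule inj_onI)
  fix n n' assume c: "c \<in> {1..a}" and n: "n \<in> V" "n' \<in> V" and eq: "cycle c n = cycle c n'"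
  have other: "n d = n' d" if "d \<noteq> c" for d
    using cycle_other[OF that, of n] cycle_other[OF that, of n'] eq by simp
  have "U c n = U c n'" "Lo c n = Lo c n'"
    using c by (auto intro!: upper_local lower_local other)
  moreover have "cycle c n c = cycle c n' c" using eq by simp
  ultimately have "n c = n' c"
    using state_bounds[OF n(1) c] state_bounds[OF n(2) c] unfolding cycle_def
    by (auto split: if_splits)
  with other show "n = n'" by (metis ext)
qed

lemma cycle_commute:
  assumes "c + 2 \<le> d \<or> d + 2 \<le> c"
  shows "cycle c (cycle d n) = cycle d (cycle c n)"
proof -
  define x where "x = (if n d < U d n then Suc (n d) else Lo d n)"
  define y where "y = (if n c < U c n then Suc (n c) else Lo c n)"
  have cd: "c \<noteq> d" using assms by auto
  have "U c (cycle d n) = U c n" "Lo c (cycle d n) = Lo c n"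
    "U d (cycle c n) = U d n" "Lo d (cycle c n) = Lo d n"
    using assms by (auto intro!: upper_local lower_local simp: cycle_other)
  hence "cycle c (cycle d n) = n(d := x, c := y)" "cycle d (cycle c n) = n(c := y, d := x)"
    unfolding cycle_def x_def y_def using cd by simp_all
  thus ?thesis using cd by (simp add: fun_upd_twist)
qed

lemma cycles_Nil [simp]: "cycles [] = id"
  unfolding cycles_def by simp

lemma cycles_Cons: "cycles (c # w) = cycles w \<circ> cycle c"
  unfolding cycles_def using fold_comp_eq[of cycle w "cycle c"] by simp

lemma cycles_append: "cycles (u @ v) = cycles v \<circ> cycles u"
  by (induction u) (auto simp: cycles_Cons)

lemma cycles_in: "set w \<subseteq> {1..a} \<Longrightarrow> n \<in> V \<Longrightarrow> cycles w n \<in> V"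
  by (induction w arbitrary: n) (auto simp: cycles_Cons cycle_in)

lemma cycles_inj: "set w \<subseteq> {1..a} \<Longrightarrow> inj_on (cycles w) V"
proof (induction w)
  case (Cons c w)
  hence c: "c \<in> {1..a}" and w: "set w \<subseteq> {1..a}" by auto
  have "cycle c ` V \<subseteq> V" using cycle_in c by auto
  hence "inj_on (cycles w) (cycle c ` V)" using Cons.IH[OF w] inj_on_subset by blast
  thus ?case unfolding cycles_Cons using comp_inj_on[OF cycle_inj[OF c]] by blast
qed simp

lemma cycles_other: "c \<notin> set w \<Longrightarrow> cycles w n c = n c"
  by (induction w arbitrary: n) (auto simp: cycles_Cons cycle_other)

lemma total_cycle:
  assumes "c \<in> {1..a}"
  shows "total (cycle c n) - total n = real (cycle c n c) - real (n c)"
proof -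
  have "(\<Sum>d\<in>{1..a} - {c}. real (cycle c n d)) = (\<Sum>d\<in>{1..a} - {c}. real (n d))"
    by (rule sum.cong) (auto simp: cycle_other)
  thus ?thesis unfolding total_def
    using sum.remove[OF _ assms, of "\<lambda>d. real (cycle c n d)"] sum.remove[OF _ assms, of "\<lambda>d. real (n d)"]
    by simp
qed

text \<open>Rotating the first letter to the end conjugates \<open>cycles\<close> by \<open>cycle c\<close>, which changes
  \<open>total\<close> only through column \<open>c\<close>.\<close>
lemma homomesic_const_rotate1:
  assumes "distinct (c # w)" "set (c # w) \<subseteq> {1..a}"
    and "homomesic_const V (cycles (c # w)) total C"
  shows "homomesic_const V (cycles (w @ [c])) total C"
proof (rule homomesic_const_intertwine[where s = "cycle c" and G = "\<lambda>n. real (n c)"])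
  have c: "c \<in> {1..a}" using assms(2) by simp
  show "finite V" by (rule finite_states)
  show "cycles (c # w) ` V \<subseteq> V" "inj_on (cycles (c # w)) V"
    using cycles_in cycles_inj assms(2) by auto
  show "cycle c ` V \<subseteq> V" "inj_on (cycle c) V" using cycle_in cycle_inj c by auto
  show "cycles (w @ [c]) (cycle c y) = cycle c (cycles (c # w) y)" for y
    by (simp add: cycles_append cycles_Cons)
  show "total (cycle c y) - total y = real (cycles (c # w) y c) - real (y c)" for y
    using total_cycle[OF c] cycles_other assms(1) by (simp add: cycles_Cons)
qed (fact assms(3))

theorem homomesic_const_any_order:
  assumes "homomesic_const V (cycles [1..<a+1]) total C" "distinct w" "set w = {1..a}"
  shows "homomesic_const V (cycles w) total C"
proof -
  let ?Q = "\<lambda>w. distinct w \<and> set w \<subseteq> {1..a} \<longrightarrow> homomesic_const V (cycles w) total C"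
  have rot: "rotation_closed ?Q"
    unfolding rotation_closed_def
  proof (intro allI impI)
    fix u v assume "?Q (u @ v)" and vu: "distinct (v @ u) \<and> set (v @ u) \<subseteq> {1..a}"
    thus "homomesic_const V (cycles (v @ u)) total C"
    proof (induction u arbitrary: v)
      case (Cons c u)
      have "homomesic_const V (cycles ((u @ v) @ [c])) total C"
        using homomesic_const_rotate1[of c "u @ v"] Cons.prems by auto
      thus ?case using Cons.IH[of "v @ [c]"] Cons.prems(2) by auto
    qed simp
  qed
  have comm: "commutation_closed a ?Q"
    unfolding commutation_closed_def
  proof (intro allI impI)
    fix u v :: "nat list" and x y :: nat
    assume "x \<le> a" "y \<le> a" "x + 2 \<le> y \<or> y + 2 \<le> x" and Q: "?Q (u @ [x, y] @ v)"
      and yx: "distinct (u @ [y, x] @ v) \<and> set (u @ [y, x] @ v) \<subseteq> {1..a}"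
    hence "cycles [x, y] = cycles [y, x]"
      using cycle_commute[of y x] by (auto simp: cycles_Cons)
    hence "cycles (u @ [x, y] @ v) = cycles (u @ [y, x] @ v)" by (simp only: cycles_append)
    with Q yx show "homomesic_const V (cycles (u @ [y, x] @ v)) total C" by auto
  qed
  have "?Q [1..<a+1]" using assms(1) by simp
  from permutation_words_reachable[OF rot comm this assms(2,3)] show ?thesis
    using assms(2,3) by simp
qed

end

section \<open>Ideals of column posets\<close>

lemma is_idealD: "is_ideal P I \<Longrightarrow> x \<in> I \<Longrightarrow> y \<in> P \<Longrightarrow> cleq y x \<Longrightarrow> y \<in> I"
  unfolding is_ideal_def by blast

text \<open>Both
  \<open>Qposet a b\<close> and \<open>Lposet a\<close> have this shape, and so does each of their order ideals.\<close>
definition column_set :: "nat \<Rightarrow> (nat \<Rightarrow> nat) \<Rightarrow> (nat \<Rightarrow> nat) \<Rightarrow> (nat \<times> nat) set" where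
  "column_set a s h = Sigma {1..a} (\<lambda>c. {s c..<s c + h c})"

definition ideal_heights :: "nat \<Rightarrow> (nat \<Rightarrow> nat) \<Rightarrow> (nat \<Rightarrow> nat) \<Rightarrow> (nat \<Rightarrow> nat) set" where
  "ideal_heights a s len =
     {h. (\<forall>c. c \<notin> {1..a} \<longrightarrow> h c = 0) \<and> is_ideal (column_set a s len) (column_set a s h)}"

lemma card_column_set: "real (card (column_set a s h)) = (\<Sum>c\<in>{1..a}. real (h c))"
  unfolding column_set_def by (simp add: card_SigmaI)

lemma column_set_inj: "inj_on (column_set a s) {h. \<forall>c. c \<notin> {1..a} \<longrightarrow> h c = 0}"
proof (rule inj_onI)
  fix h h' assume h: "h \<in> {h. \<forall>c. c \<notin> {1..a} \<longrightarrow> h c = 0}" "h' \<in> {h. \<forall>c. c \<notin> {1..a} \<longrightarrow> h c = 0}"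
    and eq: "column_set a s h = column_set a s h'"
  have "h c = h' c" for c
  proof (cases "c \<in> {1..a}")
    case True
    hence "{j. (c, j) \<in> column_set a s g} = {s c..<s c + g c}" for g
      unfolding column_set_def by auto
    thus ?thesis using arg_cong[OF eq, of "\<lambda>I. card {j. (c, j) \<in> I}"] by simp
  qed (use h in auto)
  thus "h = h'" by (rule ext)
qed

lemma ideal_heights_finite: "finite (ideal_heights a s len)"
proof (rule finite_subset)
  let ?B = "\<Union>d\<in>{1..a}. {0..len d}"
  show "ideal_heights a s len \<subseteq> {h. \<forall>c. (c \<in> {1..a} \<longrightarrow> h c \<in> ?B) \<and> (c \<notin> {1..a} \<longrightarrow> h c = 0)}"
  proof
    fix h assume "h \<in> ideal_heights a s len"
    hence zero: "\<forall>c. c \<notin> {1..a} \<longrightarrow> h c = 0" and sub: "column_set a s h \<subseteq> column_set a s len"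
      unfolding ideal_heights_def is_ideal_def by auto
    have "h c \<in> ?B" if c: "c \<in> {1..a}" for c
    proof -
      have "h c \<le> len c"
      proof (rule ccontr)
        assume "\<not> h c \<le> len c"
        hence "(c, s c + len c) \<in> column_set a s h" using c unfolding column_set_def by auto
        with sub have "(c, s c + len c) \<in> column_set a s len" by blast
        thus False unfolding column_set_def by simp
      qed
      thus ?thesis using c by force
    qed
    with zero show "h \<in> {h. \<forall>c. (c \<in> {1..a} \<longrightarrow> h c \<in> ?B) \<and> (c \<notin> {1..a} \<longrightarrow> h c = 0)}"
      by simp
  qed
  show "finite {h. \<forall>c. (c \<in> {1..a} \<longrightarrow> h c \<in> ?B) \<and> (c \<notin> {1..a} \<longrightarrow> h c = 0)}"
    by (rule finite_set_of_finite_funs) auto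
qed

lemma down_closed_eq_interval:
  assumes "finite J" "\<And>j. j \<in> J \<Longrightarrow> s \<le> j" "\<And>j j'. j \<in> J \<Longrightarrow> s \<le> j' \<Longrightarrow> j' \<le> j \<Longrightarrow> j' \<in> J"
  shows "J = {s..<s + card J}"
proof (cases "J = {}")
  case False
  define M where "M = Max J"
  have M: "M \<in> J" "\<And>j. j \<in> J \<Longrightarrow> j \<le> M"
    using Max_in Max_ge assms(1) False unfolding M_def by auto
  have "J = {s..M}"
  proof
    show "J \<subseteq> {s..M}" using M(2) assms(2) by auto
    show "{s..M} \<subseteq> J" using assms(3)[OF M(1)] by auto
  qed
  moreover have "s \<le> M" using M assms(2) by auto
  ultimately show ?thesis by auto
qed simp

lemma ideal_column_interval:
  assumes I: "is_ideal (column_set a s len) I" and c: "c \<in> {1..a}"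
  shows "{j. (c, j) \<in> I} = {s c..<s c + card {j. (c, j) \<in> I}}"
proof (rule down_closed_eq_interval)
  have sub: "{j. (c, j) \<in> I} \<subseteq> {s c..<s c + len c}"
    using I unfolding is_ideal_def column_set_def by auto
  show "finite {j. (c, j) \<in> I}" using sub finite_subset by blast
  show "s c \<le> j" if "j \<in> {j. (c, j) \<in> I}" for j using sub that by auto
  show "j' \<in> {j. (c, j) \<in> I}" if "j \<in> {j. (c, j) \<in> I}" "s c \<le> j'" "j' \<le> j" for j j'
  proof -
    have "(c, j') \<in> column_set a s len" using sub that c unfolding column_set_def by auto
    moreover have "cleq (c, j') (c, j)" using that unfolding cleq_def by auto
    ultimately show ?thesis using I that unfolding is_ideal_def by blast
  qed
qed

lemma column_set_image:
  "column_set a s ` ideal_heights a s len = ideals (column_set a s len)"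
proof
  show "column_set a s ` ideal_heights a s len \<subseteq> ideals (column_set a s len)"
    unfolding ideal_heights_def ideals_def by auto
next
  show "ideals (column_set a s len) \<subseteq> column_set a s ` ideal_heights a s len"
  proof
    fix I assume "I \<in> ideals (column_set a s len)"
    hence I: "is_ideal (column_set a s len) I" unfolding ideals_def by simp
    define h where "h c = (if c \<in> {1..a} then card {j. (c, j) \<in> I} else 0)" for c
    have "I = column_set a s h"
    proof (rule set_eqI)
      fix x :: "nat \<times> nat"
      obtain c j where x: "x = (c, j)" by fastforce
      show "x \<in> I \<longleftrightarrow> x \<in> column_set a s h"
      proof (cases "c \<in> {1..a}")
        case True
        thus ?thesis using ideal_column_interval[OF I True] unfolding x column_set_def h_def by auto
      next
        case False
        thus ?thesis using I unfolding x column_set_def is_ideal_def by auto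
      qed
    qed
    moreover have "h \<in> ideal_heights a s len"
      using I \<open>I = column_set a s h\<close> unfolding ideal_heights_def h_def by auto
    ultimately show "I \<in> column_set a s ` ideal_heights a s len" by blast
  qed
qed

lemma column_column_set:
  assumes "c \<in> {1..a}"
  shows "column (column_set a s len) c = map (Pair c) [s c..<s c + len c]"
proof -
  have "{j. (c, j) \<in> column_set a s len} = {s c..<s c + len c}"
    using assms unfolding column_set_def by auto
  thus ?thesis unfolding column_def by simp
qed

section \<open>Comotion on column posets\<close>

lemma chain_toggle_Cons: "chain_toggle P (x # xs) I = toggle P x (chain_toggle P xs I)"
  unfolding chain_toggle_def by simp

locale column_poset = column_system a U Lo "ideal_heights a s len"
  for a :: nat and s len :: "nat \<Rightarrow> nat" and U Lo :: "nat \<Rightarrow> (nat \<Rightarrow> nat) \<Rightarrow> nat"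
begin

abbreviation cells :: "(nat \<times> nat) set" where
  "cells \<equiv> column_set a s len"

context
  fixes n c assumes n: "n \<in> ideal_heights a s len" and c: "c \<in> {1..a}"
begin

private abbreviation D :: "nat \<Rightarrow> (nat \<times> nat) set" where
  "D m \<equiv> column_set a s (n(c := m))"

lemma mem_column_set_update: "(c, j) \<in> D m \<longleftrightarrow> s c \<le> j \<and> j < s c + m"
  using c unfolding column_set_def by auto

lemma ideal_column_set_update: "is_ideal cells (D m) \<longleftrightarrow> Lo c n \<le> m \<and> m \<le> U c n"
proof -
  have "\<forall>d. d \<notin> {1..a} \<longrightarrow> (n(c := m)) d = 0" using n c unfolding ideal_heights_def by auto
  hence "is_ideal cells (D m) \<longleftrightarrow> n(c := m) \<in> ideal_heights a s len"
    unfolding ideal_heights_def by simp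
  thus ?thesis using update_iff[OF n c] by simp
qed

lemma upper_le_len: "U c n \<le> len c"
proof (rule ccontr)
  assume "\<not> U c n \<le> len c"
  hence "(c, s c + len c) \<in> D (U c n)" using mem_column_set_update by simp
  moreover have "is_ideal cells (D (U c n))"
    using ideal_column_set_update state_bounds[OF n c] by simp
  ultimately have "(c, s c + len c) \<in> cells" unfolding is_ideal_def by blast
  thus False unfolding column_set_def by simp
qed

lemma toggle_cell_outside:
  assumes m: "Lo c n \<le> m" "m \<le> U c n" and j: "s c + m \<le> j"
  shows "toggle cells (c, j) (D m) = D (if j = s c + m \<and> m < U c n then Suc m else m)"
proof -
  have out: "(c, j) \<notin> D m" using j mem_column_set_update by simp
  show ?thesis
  proof (cases "j = s c + m")
    case True
    have "insert (c, j) (D m) = D (Suc m)"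
      using True c unfolding column_set_def by (auto split: if_splits)
    thus ?thesis using out ideal_column_set_update[of "Suc m"] True m by (simp add: toggle_def)
  next
    case False
    have "\<not> is_ideal cells (insert (c, j) (D m))"
    proof
      assume ideal: "is_ideal cells (insert (c, j) (D m))"
      hence "(c, j) \<in> cells" unfolding is_ideal_def by simp
      hence "(c, s c + m) \<in> cells" using c j unfolding column_set_def by auto
      moreover have "cleq (c, s c + m) (c, j)" unfolding cleq_def using j by simp
      ultimately have "(c, s c + m) \<in> insert (c, j) (D m)"
        using is_idealD[OF ideal] by blast
      thus False using mem_column_set_update False by simp
    qed
    with out show ?thesis using False by (simp add: toggle_def)
  qed
qed

lemma toggle_cell_inside:
  assumes m: "Lo c n \<le> m" "m \<le> U c n" and j: "s c \<le> j" "j < s c + m"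
  shows "toggle cells (c, j) (D m) = D (if Suc j = s c + m \<and> Lo c n < m then m - 1 else m)"
proof -
  have isin: "(c, j) \<in> D m" using j mem_column_set_update by simp
  show ?thesis
  proof (cases "Suc j = s c + m")
    case True
    have "D m - {(c, j)} = D (m - 1)"
      using True c unfolding column_set_def by (auto split: if_splits)
    moreover have "Lo c n \<le> m - 1 \<and> m - 1 \<le> U c n \<longleftrightarrow> Lo c n < m" using True j m by auto
    ultimately show ?thesis using isin ideal_column_set_update[of "m - 1"] True by (simp add: toggle_def)
  next
    case False
    have "\<not> is_ideal cells (D m - {(c, j)})"
    proof
      assume ideal: "is_ideal cells (D m - {(c, j)})"
      have "is_ideal cells (D m)" using ideal_column_set_update m by simp
      hence "(c, j) \<in> cells" using isin unfolding is_ideal_def by blast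
      moreover have "(c, Suc j) \<in> D m - {(c, j)}" "cleq (c, j) (c, Suc j)"
        using j False mem_column_set_update unfolding cleq_def by simp_all
      ultimately have "(c, j) \<in> D m - {(c, j)}" using is_idealD[OF ideal] by blast
      thus False by simp
    qed
    with isin show ?thesis using False by (simp add: toggle_def)
  qed
qed

lemma toggle_cell:
  assumes m: "Lo c n \<le> m" "m \<le> U c n" and j: "s c \<le> j"
  shows "toggle cells (c, j) (D m) =
    D (if j = s c + m \<and> m < U c n then Suc m else if Suc j = s c + m \<and> Lo c n < m then m - 1 else m)"
  using toggle_cell_outside[OF m] toggle_cell_inside[OF m j] by (cases "j < s c + m") simp_all

text \<open>Toggling the cells of column \<open>c\<close> from the top down: above the current height nothing
  changes until the first empty cell, which is added if possible; if it is not, the cells are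
  removed one after the other down to the lower bound.\<close>
lemma toggle_column_suffix:
  assumes m: "Lo c n \<le> m" "m \<le> U c n"
  shows "i + k = len c \<Longrightarrow> chain_toggle cells (map (Pair c) [s c + i..<s c + len c]) (D m) =
    D (if m < U c n then (if i \<le> m then Suc m else m) else (if i < m then max i (Lo c n) else m))"
proof (induction k arbitrary: i)
  case 0
  thus ?case using upper_le_len m by (auto simp: chain_toggle_def)
next
  case (Suc k)
  let ?h = "\<lambda>i. if m < U c n then (if i \<le> m then Suc m else m) else (if i < m then max i (Lo c n) else m)"
  have "Suc i + k = len c" using Suc.prems by simp
  note IH = Suc.IH[OF this]
  have "map (Pair c) [s c + i..<s c + len c] = (c, s c + i) # map (Pair c) [s c + Suc i..<s c + len c]"
    using Suc.prems by (simp add: upt_rec)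
  hence "chain_toggle cells (map (Pair c) [s c + i..<s c + len c]) (D m)
      = toggle cells (c, s c + i) (D (?h (Suc i)))"
    by (simp only: chain_toggle_Cons IH)
  also have "\<dots> = D (if s c + i = s c + ?h (Suc i) \<and> ?h (Suc i) < U c n then Suc (?h (Suc i))
      else if Suc (s c + i) = s c + ?h (Suc i) \<and> Lo c n < ?h (Suc i) then ?h (Suc i) - 1 else ?h (Suc i))"
    using m by (intro toggle_cell) auto
  also have "(if s c + i = s c + ?h (Suc i) \<and> ?h (Suc i) < U c n then Suc (?h (Suc i))
      else if Suc (s c + i) = s c + ?h (Suc i) \<and> Lo c n < ?h (Suc i) then ?h (Suc i) - 1 else ?h (Suc i))
      = ?h i"
    using m by (auto simp: max_def)
  finally show ?case .
qed

lemma toggle_column: "chain_toggle cells (column cells c) (column_set a s n) = column_set a s (cycle c n)"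
proof -
  have b: "Lo c n \<le> n c" "n c \<le> U c n" using state_bounds[OF n c] by auto
  from toggle_column_suffix[OF b, of 0 "len c"] show ?thesis
    using column_column_set[OF c] b unfolding cycle_def by (auto simp: fun_upd_idem)
qed

end

lemma comotion_column_set:
  assumes "\<nu> permutes {1..a}" "n \<in> ideal_heights a s len"
  shows "comotion cells a \<nu> (column_set a s n) = column_set a s (cycles (map \<nu> [1..<a+1]) n)"
  unfolding comotion_def cycles_def
proof (rule fold_comp_intertwine[where V = "ideal_heights a s len"])
  have "set [1..<a+1] = {1..a}" by auto
  hence "set (map \<nu> [1..<a+1]) = {1..a}" by (simp only: set_map permutes_image[OF assms(1)])
  thus "c \<in> set (map \<nu> [1..<a+1]) \<Longrightarrow> m \<in> ideal_heights a s len \<Longrightarrow>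
    chain_toggle cells (column cells c) (column_set a s m) = column_set a s (cycle c m) \<and>
    cycle c m \<in> ideal_heights a s len" for c m
    using toggle_column cycle_in by auto
qed (fact assms(2))

theorem homomesic_card_comotion:
  assumes "homomesic_const (ideal_heights a s len) (cycles [1..<a+1]) total C" "\<nu> permutes {1..a}"
  shows "homomesic (ideals cells) (comotion cells a \<nu>) (\<lambda>I. real (card I))"
proof -
  let ?w = "map \<nu> [1..<a+1]"
  have "set [1..<a+1] = {1..a}" by auto
  hence w: "distinct ?w" "set ?w = {1..a}"
    using permutes_inj_on[OF assms(2)]
    by (simp_all only: distinct_map distinct_upt set_map permutes_image[OF assms(2)])
  have "cycles ?w ` ideal_heights a s len \<subseteq> ideal_heights a s len"
    by (rule image_subsetI, rule cycles_in) (use w(2) in simp_all)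
  hence "homomesic (ideal_heights a s len) (cycles ?w) total"
    using homomesic_const_imp_homomesic[OF ideal_heights_finite] homomesic_const_any_order[OF assms(1) w]
    by blast
  thus ?thesis
  proof (rule homomesic_transfer[where d = "column_set a s", rotated -1])
    show "cycles ?w ` ideal_heights a s len \<subseteq> ideal_heights a s len" by fact
    show "inj_on (column_set a s) (ideal_heights a s len)"
      using column_set_inj by (rule inj_on_subset) (auto simp: ideal_heights_def)
    show "column_set a s ` ideal_heights a s len = ideals cells" by (rule column_set_image)
    show "comotion cells a \<nu> (column_set a s y) = column_set a s (cycles ?w y)"
      if "y \<in> ideal_heights a s len" for y
      using comotion_column_set[OF assms(2) that] .
    show "real (card (column_set a s y)) = total y" for y
      unfolding total_def by (rule card_column_set)
  qed
qed

end

section \<open>The rectangle\<close>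

definition rect_heights :: "nat \<Rightarrow> nat \<Rightarrow> (nat \<Rightarrow> nat) set" where
  "rect_heights a b = {n. (\<forall>c. c \<notin> {1..a} \<longrightarrow> n c = 0) \<and> (\<forall>c\<in>{1..a}. n c \<le> b)
      \<and> (\<forall>c. 1 \<le> c \<and> c < a \<longrightarrow> n (Suc c) \<le> n c)}"

definition rect_upper :: "nat \<Rightarrow> nat \<Rightarrow> (nat \<Rightarrow> nat) \<Rightarrow> nat" where
  "rect_upper b c n = (if c = 1 then b else n (c - 1))"

definition rect_lower :: "nat \<Rightarrow> (nat \<Rightarrow> nat) \<Rightarrow> nat" where
  "rect_lower c n = n (Suc c)"

lemma Qposet_column_set: "Qposet a b = column_set a (\<lambda>_. 1) (\<lambda>_. b)"
  unfolding Qposet_def column_set_def by auto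

lemma rect_heights_antimono:
  "n \<in> rect_heights a b \<Longrightarrow> 1 \<le> c \<Longrightarrow> c \<le> d \<Longrightarrow> d \<le> a \<Longrightarrow> n d \<le> n c"
proof (induction d)
  case (Suc d)
  show ?case
  proof (cases "c = Suc d")
    case False
    hence "n (Suc d) \<le> n d" using Suc.prems unfolding rect_heights_def by auto
    thus ?thesis using Suc False by auto
  qed simp
qed simp

lemma is_ideal_rect_heights:
  assumes n: "n \<in> rect_heights a b"
  shows "is_ideal (column_set a (\<lambda>_. 1) (\<lambda>_. b)) (column_set a (\<lambda>_. 1) n)"
  unfolding is_ideal_def
proof (intro conjI ballI impI)
  show "column_set a (\<lambda>_. 1) n \<subseteq> column_set a (\<lambda>_. 1) (\<lambda>_. b)"
    using n unfolding column_set_def rect_heights_def by force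
  fix x y assume x: "x \<in> column_set a (\<lambda>_. 1) n" and y: "y \<in> column_set a (\<lambda>_. 1) (\<lambda>_. b)"
    and "cleq y x"
  then obtain c j c' j' where "x = (c, j)" "y = (c', j')" "c' \<le> c" "j' \<le> j" "j < 1 + n c"
    "c \<le> a" "1 \<le> c'" "1 \<le> j'"
    unfolding column_set_def cleq_def by auto
  moreover have "n c \<le> n c'" using rect_heights_antimono[OF n] calculation by auto
  ultimately show "y \<in> column_set a (\<lambda>_. 1) n" using y unfolding column_set_def by auto
qed

lemma ideal_heights_rect: "ideal_heights a (\<lambda>_. 1) (\<lambda>_. b) = rect_heights a b"
proof (intro set_eqI iffI)
  fix n assume "n \<in> ideal_heights a (\<lambda>_. 1) (\<lambda>_. b)"
  hence zero: "\<forall>c. c \<notin> {1..a} \<longrightarrow> n c = 0"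
    and sub: "column_set a (\<lambda>_. 1) n \<subseteq> column_set a (\<lambda>_. 1) (\<lambda>_. b)"
    and down: "\<And>x y. x \<in> column_set a (\<lambda>_. 1) n \<Longrightarrow> y \<in> column_set a (\<lambda>_. 1) (\<lambda>_. b) \<Longrightarrow>
      cleq y x \<Longrightarrow> y \<in> column_set a (\<lambda>_. 1) n"
    unfolding ideal_heights_def is_ideal_def by auto
  have top: "(c, n c) \<in> column_set a (\<lambda>_. 1) n" if "c \<in> {1..a}" "n c \<noteq> 0" for c
    using that unfolding column_set_def by auto
  have "n c \<le> b" if "c \<in> {1..a}" for c
  proof (cases "n c = 0")
    case False
    have "(c, n c) \<in> column_set a (\<lambda>_. 1) (\<lambda>_. b)" using subsetD[OF sub top[OF that False]] .
    thus ?thesis unfolding column_set_def by simp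
  qed simp
  moreover have "n (Suc c) \<le> n c" if "1 \<le> c" "c < a" for c
  proof (cases "n (Suc c) = 0")
    case False
    have "(c, n (Suc c)) \<in> column_set a (\<lambda>_. 1) n"
    proof (rule down)
      show "(Suc c, n (Suc c)) \<in> column_set a (\<lambda>_. 1) n" using top False that by simp
      from subsetD[OF sub this] show "(c, n (Suc c)) \<in> column_set a (\<lambda>_. 1) (\<lambda>_. b)"
        using that unfolding column_set_def by auto
    qed (simp add: cleq_def)
    thus ?thesis unfolding column_set_def by auto
  qed simp
  ultimately show "n \<in> rect_heights a b" using zero unfolding rect_heights_def by auto
next
  fix n assume n: "n \<in> rect_heights a b"
  from is_ideal_rect_heights[OF n] show "n \<in> ideal_heights a (\<lambda>_. 1) (\<lambda>_. b)"
    using n unfolding ideal_heights_def rect_heights_def by auto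
qed

lemma rect_heights_update_bounds:
  assumes n: "n \<in> rect_heights a b" and c: "c \<in> {1..a}"
    and m: "n(c := m) \<in> rect_heights a b"
  shows "rect_lower c n \<le> m \<and> m \<le> rect_upper b c n"
proof -
  have "rect_lower c n \<le> m"
  proof (cases "c < a")
    case True
    thus ?thesis using m c unfolding rect_heights_def rect_lower_def by (auto dest!: spec[of _ c])
  next
    case False
    thus ?thesis using n c unfolding rect_heights_def rect_lower_def by auto
  qed
  moreover have "m \<le> rect_upper b c n"
  proof (cases "c = 1")
    case True
    thus ?thesis using m c unfolding rect_heights_def rect_upper_def by (auto dest!: bspec[of _ _ c])
  next
    case False
    hence "1 \<le> c - 1" "c - 1 < a" "Suc (c - 1) = c" using c by auto
    moreover have "\<forall>d. 1 \<le> d \<and> d < a \<longrightarrow> (n(c := m)) (Suc d) \<le> (n(c := m)) d"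
      using m unfolding rect_heights_def by blast
    ultimately have "(n(c := m)) c \<le> (n(c := m)) (c - 1)" by metis
    thus ?thesis using False \<open>Suc (c - 1) = c\<close> unfolding rect_upper_def by (simp split: if_splits)
  qed
  ultimately show ?thesis ..
qed

lemma rect_heights_update_mem:
  assumes n: "n \<in> rect_heights a b" and c: "c \<in> {1..a}"
    and m: "rect_lower c n \<le> m \<and> m \<le> rect_upper b c n"
  shows "n(c := m) \<in> rect_heights a b"
proof -
  have zero: "\<forall>c. c \<notin> {1..a} \<longrightarrow> n c = 0" and le_b: "\<forall>c\<in>{1..a}. n c \<le> b"
    and anti: "\<forall>c. 1 \<le> c \<and> c < a \<longrightarrow> n (Suc c) \<le> n c"
    using n unfolding rect_heights_def by auto
  have "m \<le> b"
  proof (cases "c = 1")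
    case False
    hence "c - 1 \<in> {1..a}" using c by auto
    thus ?thesis using m le_b False unfolding rect_upper_def by fastforce
  qed (use m in \<open>simp add: rect_upper_def\<close>)
  moreover have "(n(c := m)) (Suc d) \<le> (n(c := m)) d" if "1 \<le> d" "d < a" for d
    using m anti that unfolding rect_lower_def rect_upper_def
    by (cases "Suc d = c"; cases "d = c") auto
  ultimately show ?thesis
    using zero le_b c unfolding rect_heights_def by auto
qed

lemma rect_heights_update:
  assumes n: "n \<in> rect_heights a b" and c: "c \<in> {1..a}"
  shows "n(c := m) \<in> rect_heights a b \<longleftrightarrow> rect_lower c n \<le> m \<and> m \<le> rect_upper b c n"
  using rect_heights_update_bounds[OF n c] rect_heights_update_mem[OF n c] by blast

lemma rect_column_poset: "column_poset a (\<lambda>_. 1) (\<lambda>_. b) (rect_upper b) rect_lower"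
  unfolding column_poset_def
proof
  show "finite (ideal_heights a (\<lambda>_. 1) (\<lambda>_. b))" by (rule ideal_heights_finite)
  show "n(c := m) \<in> ideal_heights a (\<lambda>_. 1) (\<lambda>_. b) \<longleftrightarrow> rect_lower c n \<le> m \<and> m \<le> rect_upper b c n"
    if "n \<in> ideal_heights a (\<lambda>_. 1) (\<lambda>_. b)" "c \<in> {1..a}" for n c m
    using rect_heights_update that unfolding ideal_heights_rect by simp
  show "rect_upper b c n = rect_upper b c n'" if "n (c - 1) = n' (c - 1)" for c n n'
    using that unfolding rect_upper_def by simp
  show "rect_lower c n = rect_lower c n'" if "n (c + 1) = n' (c + 1)" for c n n'
    using that unfolding rect_lower_def by simp
qed

lemma sum_telescope_ivl:
  fixes f :: "nat \<Rightarrow> 'a::ab_group_add"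
  shows "(\<Sum>c\<in>{1..a}. f c - f (Suc c)) = f 1 - f (Suc a)"
  by (induction a) (auto simp: sum.cl_ivl_Suc)

lemma sum_shift_ivl:
  fixes f :: "nat \<Rightarrow> 'a::ab_group_add"
  shows "(\<Sum>c\<in>{1..a}. f (Suc c)) = (\<Sum>c\<in>{1..a}. f c) - f 1 + f (Suc a)"
  by (induction a) (auto simp: sum.cl_ivl_Suc)

context
  fixes a b :: nat
begin

interpretation rect: column_poset a "\<lambda>_. 1" "\<lambda>_. b" "rect_upper b" rect_lower
  by (rule rect_column_poset)

text \<open>The heights after cycling the columns \<open>1, \<dots>, a\<close> in this order.\<close>
definition rect_sweep :: "(nat \<Rightarrow> nat) \<Rightarrow> nat \<Rightarrow> nat" where
  "rect_sweep n c = (if n 1 < b then Suc (n c) else n (Suc c))"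

lemma rect_cycles_prefix:
  assumes n: "n \<in> rect_heights a b"
  shows "k \<le> a \<Longrightarrow> rect.cycles [1..<k+1] n = (\<lambda>c. if 1 \<le> c \<and> c \<le> k then rect_sweep n c else n c)"
proof (induction k)
  case (Suc k)
  define S where "S = (\<lambda>c. if 1 \<le> c \<and> c \<le> k then rect_sweep n c else n c)"
  have "rect.cycles [1..<Suc k + 1] n = rect.cycle (Suc k) S"
    using Suc by (simp add: rect.cycles_append rect.cycles_Cons S_def)
  moreover have "(if S (Suc k) < rect_upper b (Suc k) S then Suc (S (Suc k)) else rect_lower (Suc k) S)
      = rect_sweep n (Suc k)"
  proof (cases "k = 0")
    case True
    have "n 1 \<le> b" using n Suc.prems unfolding rect_heights_def by auto
    thus ?thesis using True unfolding S_def rect_upper_def rect_lower_def rect_sweep_def by auto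
  next
    case False
    have "n (Suc k) \<le> n k" using n Suc.prems False unfolding rect_heights_def by auto
    thus ?thesis using False unfolding S_def rect_upper_def rect_lower_def rect_sweep_def by auto
  qed
  ultimately show ?case unfolding rect.cycle_def by (auto simp: S_def)
qed (simp add: fun_eq_iff)

text \<open>The quadratic part of the potential absorbs the sweep that grows every column, the
  weight \<open>c\<close> of column \<open>c\<close> the sweep that shifts all heights to the left.\<close>
definition rect_potential_term :: "nat \<Rightarrow> real" where
  "rect_potential_term x = - (real x * (real x - 1)) / 2 + real x * real b / 2 - (real a + 1) * real x / 2"

definition rect_potential :: "(nat \<Rightarrow> nat) \<Rightarrow> real" where
  "rect_potential n = (\<Sum>c\<in>{1..a}. rect_potential_term (n c) + real c * real (n c))"

lemma rect_coboundary:
  assumes n: "n \<in> rect_heights a b" and a: "a \<ge> 1"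
  shows "rect.total n - real a * real b / 2 = rect_potential n - rect_potential (rect.cycles [1..<a+1] n)"
proof -
  have sweep: "rect.cycles [1..<a+1] n c = rect_sweep n c" if "c \<in> {1..a}" for c
    using rect_cycles_prefix[OF n order_refl] that by simp
  show ?thesis
  proof (cases "n 1 < b")
    case True
    have "rect_potential n - rect_potential (rect.cycles [1..<a+1] n)
        = (\<Sum>c\<in>{1..a}. real (n c) - real b / 2 + (real a + 1) / 2 - real c)"
      unfolding rect_potential_def sum_subtractf[symmetric] using sweep True
      by (intro sum.cong) (auto simp: rect_sweep_def rect_potential_term_def field_simps)
    also have "\<dots> = rect.total n - real a * real b / 2 + real a * (real a + 1) / 2 - (\<Sum>c\<in>{1..a}. real c)"
      unfolding rect.total_def by (simp add: sum.distrib sum_subtractf)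
    also have "(\<Sum>c\<in>{1..a}. real c) = real a * (real a + 1) / 2"
      by (induction a) (auto simp: sum.cl_ivl_Suc field_simps)
    finally show ?thesis by simp
  next
    case False
    let ?\<phi> = "\<lambda>c. rect_potential_term (n c) + real c * real (n c)"
    have "n 1 = b" using False n a unfolding rect_heights_def by force
    have "n (Suc a) = 0" using n unfolding rect_heights_def by auto
    have "rect_potential n - rect_potential (rect.cycles [1..<a+1] n)
        = (\<Sum>c\<in>{1..a}. ?\<phi> c - ?\<phi> (Suc c)) + (\<Sum>c\<in>{1..a}. real (n (Suc c)))"
      unfolding rect_potential_def sum_subtractf[symmetric] sum.distrib[symmetric] using sweep False
      by (intro sum.cong) (auto simp: rect_sweep_def field_simps)
    also have "\<dots> = (?\<phi> 1 - ?\<phi> (Suc a)) + (rect.total n - real (n 1) + real (n (Suc a)))"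
      unfolding rect.total_def
      by (simp only: sum_telescope_ivl[of ?\<phi> a] sum_shift_ivl[of "\<lambda>c. real (n c)" a])
    also have "\<dots> = rect.total n - real a * real b / 2"
      using \<open>n 1 = b\<close> \<open>n (Suc a) = 0\<close> by (simp add: rect_potential_term_def field_simps)
    finally show ?thesis by simp
  qed
qed

lemma rect_homomesic_const:
  assumes "a \<ge> 1"
  shows "homomesic_const (ideal_heights a (\<lambda>_. 1) (\<lambda>_. b)) (rect.cycles [1..<a+1]) rect.total
    (real a * real b / 2)"
proof (rule coboundary_homomesic_const)
  have w: "set [1..<a+1] \<subseteq> {1..a}" by auto
  show "rect.cycles [1..<a+1] ` ideal_heights a (\<lambda>_. 1) (\<lambda>_. b) \<subseteq> ideal_heights a (\<lambda>_. 1) (\<lambda>_. b)"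
    by (rule image_subsetI) (rule rect.cycles_in[OF w])
  show "inj_on (rect.cycles [1..<a+1]) (ideal_heights a (\<lambda>_. 1) (\<lambda>_. b))"
    by (rule rect.cycles_inj[OF w])
  show "finite (ideal_heights a (\<lambda>_. 1) (\<lambda>_. b))" by (rule ideal_heights_finite)
  show "rect.total y - real a * real b / 2 = rect_potential y - rect_potential (rect.cycles [1..<a+1] y)"
    if "y \<in> ideal_heights a (\<lambda>_. 1) (\<lambda>_. b)" for y
    using rect_coboundary that assms unfolding ideal_heights_rect by blast
qed

end

section \<open>The shifted staircase\<close>

definition stair_heights :: "nat \<Rightarrow> (nat \<Rightarrow> nat) set" where
  "stair_heights a = {n. (\<forall>c. c \<notin> {1..a} \<longrightarrow> n c = 0) \<and> (\<forall>c\<in>{1..a}. n c \<le> a + 1 - c)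
      \<and> (\<forall>c. 2 \<le> c \<and> c \<le> a \<and> 0 < n c \<longrightarrow> n c < n (c - 1))}"

text \<open>If the left neighbour is empty, the truncated subtraction gives the upper bound \<open>0\<close>.\<close>
definition stair_upper :: "nat \<Rightarrow> nat \<Rightarrow> (nat \<Rightarrow> nat) \<Rightarrow> nat" where
  "stair_upper a c n = (if c = 1 then a else n (c - 1) - 1)"

definition stair_lower :: "nat \<Rightarrow> (nat \<Rightarrow> nat) \<Rightarrow> nat" where
  "stair_lower c n = (if 0 < n (Suc c) then Suc (n (Suc c)) else 0)"

lemma Lposet_column_set: "Lposet a = column_set a (\<lambda>c. c) (\<lambda>c. a + 1 - c)"
  unfolding Lposet_def column_set_def by auto

lemma stair_heightsD:
  assumes "n \<in> stair_heights a"
  shows stair_heights_zero: "c \<notin> {1..a} \<Longrightarrow> n c = 0"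
    and stair_heights_bound: "c \<in> {1..a} \<Longrightarrow> n c \<le> a + 1 - c"
    and stair_heights_strict: "2 \<le> c \<Longrightarrow> c \<le> a \<Longrightarrow> 0 < n c \<Longrightarrow> n c < n (c - 1)"
  using assms unfolding stair_heights_def by blast+

lemma stair_heights_top_mono:
  assumes "n \<in> stair_heights a" "1 \<le> c'" "c' \<le> c" "c \<le> a" "0 < n c"
  shows "n c + c \<le> n c' + c'"
  using assms(3-5)
proof (induction c)
  case (Suc c)
  show ?case
  proof (cases "c' = Suc c")
    case False
    hence "c' \<le> c" using Suc.prems by auto
    have "n (Suc c) < n c" using stair_heights_strict[OF assms(1), of "Suc c"] Suc.prems assms(2) \<open>c' \<le> c\<close> by auto
    thus ?thesis using Suc.IH Suc.prems \<open>c' \<le> c\<close> by auto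
  qed simp
qed simp

lemma stair_heights_empty_Suc:
  assumes "n \<in> stair_heights a" "1 \<le> d" "n d = 0"
  shows "n (Suc d) = 0"
proof (cases "Suc d \<le> a")
  case True
  thus ?thesis using stair_heights_strict[OF assms(1), of "Suc d"] assms(2,3) by (cases "n (Suc d)") auto
qed (use stair_heights_zero[OF assms(1)] in auto)

lemma is_ideal_stair_heights:
  assumes n: "n \<in> stair_heights a"
  shows "is_ideal (column_set a (\<lambda>c. c) (\<lambda>c. a + 1 - c)) (column_set a (\<lambda>c. c) n)"
  unfolding is_ideal_def
proof (intro conjI ballI impI)
  show "column_set a (\<lambda>c. c) n \<subseteq> column_set a (\<lambda>c. c) (\<lambda>c. a + 1 - c)"
    using stair_heights_bound[OF n] unfolding column_set_def by fastforce
  fix x y assume x: "x \<in> column_set a (\<lambda>c. c) n" and y: "y \<in> column_set a (\<lambda>c. c) (\<lambda>c. a + 1 - c)"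
    and "cleq y x"
  then obtain c j c' j' where cj: "x = (c, j)" "y = (c', j')" "c' \<le> c" "j' \<le> j" "c \<le> j" "j < c + n c"
    "c \<le> a" "1 \<le> c'" "c' \<le> j'"
    unfolding column_set_def cleq_def by auto
  moreover have "n c + c \<le> n c' + c'" using stair_heights_top_mono[OF n] cj by auto
  ultimately show "y \<in> column_set a (\<lambda>c. c) n" using y unfolding column_set_def by auto
qed

lemma ideal_heights_stair: "ideal_heights a (\<lambda>c. c) (\<lambda>c. a + 1 - c) = stair_heights a"
proof (intro set_eqI iffI)
  fix n assume "n \<in> ideal_heights a (\<lambda>c. c) (\<lambda>c. a + 1 - c)"
  hence zero: "\<forall>c. c \<notin> {1..a} \<longrightarrow> n c = 0"
    and sub: "column_set a (\<lambda>c. c) n \<subseteq> column_set a (\<lambda>c. c) (\<lambda>c. a + 1 - c)"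
    and ideal: "is_ideal (column_set a (\<lambda>c. c) (\<lambda>c. a + 1 - c)) (column_set a (\<lambda>c. c) n)"
    unfolding ideal_heights_def is_ideal_def by auto
  have top: "(c, c + n c - 1) \<in> column_set a (\<lambda>c. c) n" if "c \<in> {1..a}" "0 < n c" for c
    using that unfolding column_set_def by auto
  have bound: "n c \<le> a + 1 - c" if "c \<in> {1..a}" for c
  proof (cases "n c = 0")
    case False
    from subsetD[OF sub top[OF that]] False show ?thesis unfolding column_set_def by auto
  qed simp
  moreover have "n c < n (c - 1)" if c: "2 \<le> c" "c \<le> a" "0 < n c" for c
  proof -
    have "(c - 1, c + n c - 1) \<in> column_set a (\<lambda>c. c) (\<lambda>c. a + 1 - c)"
      using bound[of c] c unfolding column_set_def by auto
    moreover have "cleq (c - 1, c + n c - 1) (c, c + n c - 1)" unfolding cleq_def by auto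
    moreover have "c \<in> {1..a}" using c by simp
    ultimately have "(c - 1, c + n c - 1) \<in> column_set a (\<lambda>c. c) n"
      using is_idealD[OF ideal top] c(3) by blast
    thus ?thesis unfolding column_set_def using c by auto
  qed
  ultimately show "n \<in> stair_heights a" using zero unfolding stair_heights_def by blast
next
  fix n assume n: "n \<in> stair_heights a"
  from is_ideal_stair_heights[OF n] show "n \<in> ideal_heights a (\<lambda>c. c) (\<lambda>c. a + 1 - c)"
    using stair_heights_zero[OF n] unfolding ideal_heights_def by auto
qed

lemma stair_heights_update_bounds:
  assumes n: "n \<in> stair_heights a" and c: "c \<in> {1..a}"
    and m: "n(c := m) \<in> stair_heights a"
  shows "stair_lower c n \<le> m \<and> m \<le> stair_upper a c n"
proof -
  have "stair_lower c n \<le> m"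
  proof (cases "0 < n (Suc c)")
    case True
    hence "Suc c \<le> a" using stair_heights_zero[OF n, of "Suc c"] by (cases "Suc c \<le> a") auto
    hence "(n(c := m)) (Suc c) < (n(c := m)) (Suc c - 1)"
      using stair_heights_strict[OF m, of "Suc c"] True c by auto
    thus ?thesis using True unfolding stair_lower_def by simp
  qed (simp add: stair_lower_def)
  moreover have "m \<le> stair_upper a c n"
  proof (cases "c = 1")
    case True
    thus ?thesis using stair_heights_bound[OF m c] unfolding stair_upper_def by simp
  next
    case False
    hence c2: "2 \<le> c" "c \<le> a" "c - 1 \<noteq> c" using c by auto
    show ?thesis
    proof (cases "m = 0")
      case False
      hence "(n(c := m)) c < (n(c := m)) (c - 1)" using stair_heights_strict[OF m c2(1,2)] by simp
      thus ?thesis using c2 unfolding stair_upper_def by auto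
    qed simp
  qed
  ultimately show ?thesis ..
qed

lemma stair_heights_update_mem:
  assumes n: "n \<in> stair_heights a" and c: "c \<in> {1..a}"
    and m: "stair_lower c n \<le> m \<and> m \<le> stair_upper a c n"
  shows "n(c := m) \<in> stair_heights a"
proof -
  have bound: "m \<le> a + 1 - c"
  proof (cases "c = 1")
    case False
    hence "c - 1 \<in> {1..a}" using c by auto
    hence "n (c - 1) \<le> a + 1 - (c - 1)" by (rule stair_heights_bound[OF n])
    thus ?thesis using m False c unfolding stair_upper_def by auto
  qed (use m in \<open>simp add: stair_upper_def\<close>)
  have left: "m < n (c - 1)" if "2 \<le> c" "0 < m"
    using m that unfolding stair_upper_def by auto
  have right: "n (Suc c) < m" if "0 < n (Suc c)"
    using m that unfolding stair_lower_def by auto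
  have "(n(c := m)) d < (n(c := m)) (d - 1)" if d: "2 \<le> d" "d \<le> a" "0 < (n(c := m)) d" for d
  proof -
    consider "d = c" | "d = Suc c" | "d \<noteq> c" "d - 1 \<noteq> c" using d by linarith
    thus ?thesis
    proof cases
      case 3
      thus ?thesis using stair_heights_strict[OF n d(1,2)] d(3) by simp
    qed (use left right d in auto)
  qed
  thus ?thesis
    using stair_heights_zero[OF n] stair_heights_bound[OF n] bound c
    unfolding stair_heights_def by auto
qed

lemma stair_heights_update:
  assumes n: "n \<in> stair_heights a" and c: "c \<in> {1..a}"
  shows "n(c := m) \<in> stair_heights a \<longleftrightarrow> stair_lower c n \<le> m \<and> m \<le> stair_upper a c n"
  using stair_heights_update_bounds[OF n c] stair_heights_update_mem[OF n c] by blast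

lemma stair_column_poset: "column_poset a (\<lambda>c. c) (\<lambda>c. a + 1 - c) (stair_upper a) stair_lower"
  unfolding column_poset_def
proof
  show "finite (ideal_heights a (\<lambda>c. c) (\<lambda>c. a + 1 - c))" by (rule ideal_heights_finite)
  show "n(c := m) \<in> ideal_heights a (\<lambda>c. c) (\<lambda>c. a + 1 - c)
      \<longleftrightarrow> stair_lower c n \<le> m \<and> m \<le> stair_upper a c n"
    if "n \<in> ideal_heights a (\<lambda>c. c) (\<lambda>c. a + 1 - c)" "c \<in> {1..a}" for n c m
    using stair_heights_update that unfolding ideal_heights_stair by simp
  show "stair_upper a c n = stair_upper a c n'" if "n (c - 1) = n' (c - 1)" for c n n'
    using that unfolding stair_upper_def by simp
  show "stair_lower c n = stair_lower c n'" if "n (c + 1) = n' (c + 1)" for c n n'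
    using that unfolding stair_lower_def by simp
qed

context
  fixes a :: nat
begin

interpretation stair: column_poset a "\<lambda>c. c" "\<lambda>c. a + 1 - c" "stair_upper a" stair_lower
  by (rule stair_column_poset)

text \<open>The heights after cycling the columns \<open>1, \<dots>, a\<close> in this order.\<close>
definition stair_sweep :: "(nat \<Rightarrow> nat) \<Rightarrow> nat \<Rightarrow> nat" where
  "stair_sweep n c =
    (if n 1 < a then (if c = 1 \<or> 0 < n (c - 1) then Suc (n c) else 0)
     else (if 0 < n (Suc c) then Suc (n (Suc c)) else 0))"

lemma stair_sweep_step:
  assumes n: "n \<in> stair_heights a" and k: "Suc k \<le> a"
    and S: "S = (\<lambda>c. if 1 \<le> c \<and> c \<le> k then stair_sweep n c else n c)"
  shows "(if S (Suc k) < stair_upper a (Suc k) S then Suc (S (Suc k)) else stair_lower (Suc k) S)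
    = stair_sweep n (Suc k)"
proof (cases "k = 0")
  case True
  have "n 1 \<le> a" using stair_heights_bound[OF n, of 1] k by auto
  thus ?thesis using True unfolding S stair_upper_def stair_lower_def stair_sweep_def by auto
next
  case False
  have S': "S (Suc k) = n (Suc k)" "S (Suc (Suc k)) = n (Suc (Suc k))"
    "stair_upper a (Suc k) S = stair_sweep n k - 1"
    unfolding S stair_upper_def using False k by auto
  show ?thesis
  proof (cases "n 1 < a")
    case grow: True
    show ?thesis
    proof (cases "(k = 1 \<or> 0 < n (k - 1)) \<and> 0 < n k")
      case True
      have "n (Suc k) < n k"
        using stair_heights_strict[OF n, of "Suc k"] k False True by (cases "n (Suc k) = 0") auto
      thus ?thesis using grow True False unfolding S' stair_sweep_def stair_lower_def by auto
    next
      case empty: False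
      have "n k = 0"
      proof (cases "k = 1 \<or> 0 < n (k - 1)")
        case False
        hence "n (k - 1) = 0" "1 \<le> k - 1" using \<open>k \<noteq> 0\<close> by auto
        from stair_heights_empty_Suc[OF n this(2,1)] show ?thesis using \<open>k \<noteq> 0\<close> by simp
      qed (use empty in auto)
      hence "n (Suc k) = 0" using stair_heights_empty_Suc[OF n] False by simp
      moreover from this have "n (Suc (Suc k)) = 0" using stair_heights_empty_Suc[OF n] by simp
      ultimately show ?thesis
        using grow \<open>n k = 0\<close> False unfolding S' stair_sweep_def stair_lower_def by auto
    qed
  next
    case full: False
    show ?thesis using full False unfolding S' stair_sweep_def stair_lower_def by auto
  qed
qed

lemma stair_cycles_prefix:
  assumes n: "n \<in> stair_heights a"
  shows "k \<le> a \<Longrightarrow> stair.cycles [1..<k+1] n = (\<lambda>c. if 1 \<le> c \<and> c \<le> k then stair_sweep n c else n c)"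
proof (induction k)
  case (Suc k)
  define S where "S = (\<lambda>c. if 1 \<le> c \<and> c \<le> k then stair_sweep n c else n c)"
  have "stair.cycles [1..<Suc k + 1] n = stair.cycle (Suc k) S"
    using Suc by (simp add: stair.cycles_append stair.cycles_Cons S_def)
  thus ?case using stair_sweep_step[OF n Suc.prems S_def] unfolding stair.cycle_def
    by (auto simp: S_def)
qed (simp add: fun_eq_iff)

definition stair_const :: real where
  "stair_const = real a * (real a + 1) / 4"

text \<open>The jump by \<open>stair_const\<close> between empty and nonempty columns accounts for the columns
  that a sweep fills or empties.\<close>
definition stair_potential_term :: "nat \<Rightarrow> real" where
  "stair_potential_term x = (if x = 0 then 0 else stair_const - real x * (real x - 1) / 2)"

definition stair_potential :: "(nat \<Rightarrow> nat) \<Rightarrow> real" where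
  "stair_potential n = (\<Sum>c\<in>{1..a}. stair_potential_term (n c))"

lemma stair_potential_term_Suc:
  "stair_potential_term x - stair_potential_term (Suc x) = (if x = 0 then - stair_const else real x)"
  unfolding stair_potential_term_def by (auto simp: field_simps)

lemma stair_coboundary_grow:
  assumes n: "n \<in> stair_heights a" and a: "a \<ge> 1" and grow: "n 1 < a"
  shows "stair_potential n - (\<Sum>c\<in>{1..a}. stair_potential_term (stair_sweep n c))
    = stair.total n - stair_const"
proof -
  define z where "z i = (if i = 0 \<or> 0 < n i then 1 else 0 :: real)" for i
  have "z a = 0"
  proof (rule ccontr)
    assume "z a \<noteq> 0"
    hence "0 < n a" using a unfolding z_def by (auto split: if_splits)
    moreover have "n a + a \<le> n 1 + 1" using stair_heights_top_mono[OF n, of 1 a] a \<open>0 < n a\<close> by auto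
    ultimately show False using grow by auto
  qed
  have term_diff: "stair_potential_term (n c) - stair_potential_term (stair_sweep n c)
      = real (n c) - stair_const * (z (c - 1) - z c)" if c: "c \<in> {1..a}" for c
  proof (cases "0 < n c")
    case True
    have "c = 1 \<or> 0 < n (c - 1)" using stair_heights_strict[OF n, of c] c True by (cases "c = 1") auto
    thus ?thesis using stair_potential_term_Suc[of "n c"] grow True unfolding stair_sweep_def z_def by auto
  next
    case False
    thus ?thesis using grow c unfolding stair_sweep_def z_def stair_potential_term_def by auto
  qed
  have "stair_potential n - (\<Sum>c\<in>{1..a}. stair_potential_term (stair_sweep n c))
      = (\<Sum>c\<in>{1..a}. real (n c) - stair_const * (z (c - 1) - z c))"
    unfolding stair_potential_def sum_subtractf[symmetric] using term_diff by (intro sum.cong) auto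
  also have "\<dots> = stair.total n - stair_const * (\<Sum>c\<in>{1..a}. z (c - 1) - z c)"
    unfolding stair.total_def by (simp add: sum_subtractf flip: sum_distrib_left)
  also have "(\<Sum>c\<in>{1..a}. z (c - 1) - z c) = z 0 - z a"
    using sum_telescope_ivl[of "\<lambda>c. z (c - 1)" a] by simp
  finally show ?thesis using \<open>z a = 0\<close> unfolding z_def by simp
qed

lemma stair_coboundary_shift:
  assumes n: "n \<in> stair_heights a" and a: "a \<ge> 1" and full: "\<not> n 1 < a"
  shows "stair_potential n - (\<Sum>c\<in>{1..a}. stair_potential_term (stair_sweep n c))
    = stair.total n - stair_const"
proof -
  have "n 1 = a" using full stair_heights_bound[OF n, of 1] a by auto
  have "n (Suc a) = 0" using stair_heights_zero[OF n] by auto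
  have step: "stair_potential_term (stair_sweep n c) = stair_potential_term (n (Suc c)) - real (n (Suc c))"
    for c using stair_potential_term_Suc[of "n (Suc c)"] full
    unfolding stair_sweep_def by (auto simp: stair_potential_term_def)
  have "stair_potential n - (\<Sum>c\<in>{1..a}. stair_potential_term (stair_sweep n c))
      = (\<Sum>c\<in>{1..a}. stair_potential_term (n c) - stair_potential_term (n (Suc c)))
        + (\<Sum>c\<in>{1..a}. real (n (Suc c)))"
    unfolding stair_potential_def sum_subtractf[symmetric] sum.distrib[symmetric]
    using step by (intro sum.cong) auto
  also have "\<dots> = stair_potential_term (n 1) - stair_potential_term (n (Suc a))
      + (stair.total n - real (n 1) + real (n (Suc a)))"
    unfolding stair.total_def
    by (simp only: sum_telescope_ivl[of "\<lambda>c. stair_potential_term (n c)" a]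
        sum_shift_ivl[of "\<lambda>c. real (n c)" a])
  also have "\<dots> = stair.total n - stair_const"
    using \<open>n 1 = a\<close> \<open>n (Suc a) = 0\<close> a
    unfolding stair_potential_term_def stair_const_def by (simp add: field_simps)
  finally show ?thesis .
qed

lemma stair_coboundary:
  assumes n: "n \<in> stair_heights a" and a: "a \<ge> 1"
  shows "stair.total n - stair_const = stair_potential n - stair_potential (stair.cycles [1..<a+1] n)"
proof -
  have "stair_potential (stair.cycles [1..<a+1] n) = (\<Sum>c\<in>{1..a}. stair_potential_term (stair_sweep n c))"
    unfolding stair_potential_def using stair_cycles_prefix[OF n order_refl] by (intro sum.cong) auto
  thus ?thesis using stair_coboundary_grow[OF n a] stair_coboundary_shift[OF n a] by (cases "n 1 < a") simp_all
qed

lemma stair_homomesic_const: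
  assumes "a \<ge> 1"
  shows "homomesic_const (ideal_heights a (\<lambda>c. c) (\<lambda>c. a + 1 - c)) (stair.cycles [1..<a+1]) stair.total
    stair_const"
proof (rule coboundary_homomesic_const)
  have w: "set [1..<a+1] \<subseteq> {1..a}" by auto
  show "stair.cycles [1..<a+1] ` ideal_heights a (\<lambda>c. c) (\<lambda>c. a + 1 - c)
      \<subseteq> ideal_heights a (\<lambda>c. c) (\<lambda>c. a + 1 - c)"
    by (rule image_subsetI) (rule stair.cycles_in[OF w])
  show "inj_on (stair.cycles [1..<a+1]) (ideal_heights a (\<lambda>c. c) (\<lambda>c. a + 1 - c))"
    by (rule stair.cycles_inj[OF w])
  show "finite (ideal_heights a (\<lambda>c. c) (\<lambda>c. a + 1 - c))" by (rule ideal_heights_finite)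
  show "stair.total y - stair_const = stair_potential y - stair_potential (stair.cycles [1..<a+1] y)"
    if "y \<in> ideal_heights a (\<lambda>c. c) (\<lambda>c. a + 1 - c)" for y
    using stair_coboundary that assms unfolding ideal_heights_stair by blast
qed

end

theorem mainTheorem10:
  fixes a b :: nat and \<nu> :: "nat \<Rightarrow> nat" and P :: "(nat \<times> nat) set"
  assumes "a \<ge> 1" "b \<ge> 1"
    and "P = Qposet a b \<or> P = Lposet a"
    and "\<nu> permutes {1..a}"
  shows "homomesic (ideals P) (comotion P a \<nu>) (\<lambda>I. real (card I))"
  using assms(3)
proof
  assume P: "P = Qposet a b"
  interpret rect: column_poset a "\<lambda>_. 1" "\<lambda>_. b" "rect_upper b" rect_lower
    by (rule rect_column_poset)
  show ?thesis unfolding P Qposet_column_set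
    by (rule rect.homomesic_card_comotion[OF rect_homomesic_const[OF assms(1)] assms(4)])
next
  assume P: "P = Lposet a"
  interpret stair: column_poset a "\<lambda>c. c" "\<lambda>c. a + 1 - c" "stair_upper a" stair_lower
    by (rule stair_column_poset)
  show ?thesis unfolding P Lposet_column_set
    by (rule stair.homomesic_card_comotion[OF stair_homomesic_const[OF assms(1)] assms(4)])
qed

end
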